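(* Let $(X_1,\Sigma_1),\dots,(X_N,\Sigma_N)$ be i.i.d. copies of a random pair $(X,\Sigma)$ valued in $\mathcal{X}\times\mathfrak{S}_n$. Suppose that $P_x\in\mathcal{T}$ for all $x\in\mathcal{X}$ and that $$H=\inf_{x\in\mathcal{X}}\min_{i<j}|p_{i,j}(x)-1/2|>0.$$ Let $\mathcal{S}_0$ be a class of measurable maps $\mathcal{X}\to\mathfrak{S}_n$ with finite cardinality $C<+\infty$ that contains the rule $s^*(x)=\sigma^*_{P_x}$. Let $\widehat{s}_N$ be any minimizer over $\mathcal{S}_0$ of $\widehat{\mathcal{R}}_N(s)=\frac1N\sum_{k=1}^N d_\tau(s(X_k),\Sigma_k)$. Then, for any $\delta\in(0,1)$, with probability at least $1-\delta$: $$\mathcal{R}(\widehat{s}_N)-\mathcal{R}^*\le \Big(\frac{n(n-1)}{2H}\Big)\times\frac{\log(C/\delta)}{N}.$$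
   Context: $\mathfrak{S}_n$ is the set of permutations of $\{1,\dots,n\}$. The Kendall $\tau$ distance is $d_\tau(\sigma,\sigma')=\sum_{i<j}\mathbb{I}\{(\sigma(i)-\sigma(j))(\sigma'(i)-\sigma'(j))<0\}$. $P_x$ is the conditional distribution of $\Sigma$ given $X=x$, and $p_{i,j}(x)=\mathbb{P}\{\Sigma(i)<\Sigma(j)\mid X=x\}$. A distribution $P$ on $\mathfrak{S}_n$ with pairwise probabilities $p_{i,j}=\mathbb{P}_{\Sigma\sim P}\{\Sigma(i)<\Sigma(j)\}$ is strictly stochastically transitive if (a) $p_{i,j}\ge1/2$ and $p_{j,k}\ge1/2$ imply $p_{i,k}\ge1/2$ for all $i,j,k$, and (b) $p_{i,j}\neq1/2$ for all $i<j$. $\mathcal{T}$ is the set of such distributions. For $P\in\mathcal{T}$, the unique minimizer $\sigma^*_P$ of $\sigma\mapsto\mathbb{E}_{\Sigma\sim P}[d_\tau(\Sigma,\sigma)]$ is given by $\sigma^*_P(i)=1+\sum_{k\neq i}\mathbb{I}\{p_{i,k}<1/2\}$. The risk is $\mathcal{R}(s)=\mathbb{E}[d_\tau(s(X),\Sigma)]$, and $\mathcal{R}^*$ is its infimum over all measurable $s:\mathcal{X}\to\mathfrak{S}_n$. *)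

theory Defs
  imports "HOL-Probability.Probability"
begin

text \<open>Permutations of {1..n}, represented as functions nat => nat fixing everything outside {1..n}.\<close>
definition perms :: "nat \<Rightarrow> (nat \<Rightarrow> nat) set" where
  "perms n = {\<sigma>. \<sigma> permutes {1..n}}"

definition dtau :: "nat \<Rightarrow> (nat \<Rightarrow> nat) \<Rightarrow> (nat \<Rightarrow> nat) \<Rightarrow> real" where
  "dtau n \<sigma> \<sigma>' = (\<Sum>i\<in>{1..n}. \<Sum>j\<in>{i<..n}.
      (if (int (\<sigma> i) - int (\<sigma> j)) * (int (\<sigma>' i) - int (\<sigma>' j)) < 0 then 1 else 0))"

definition pw :: "(nat \<Rightarrow> nat) pmf \<Rightarrow> nat \<Rightarrow> nat \<Rightarrow> real" where
  "pw P i j = measure_pmf.prob P {\<sigma>. \<sigma> i < \<sigma> j}"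

text \<open>Strict stochastic transitivity (the class T), for distributions on S_n.\<close>
definition SST :: "nat \<Rightarrow> (nat \<Rightarrow> nat) pmf \<Rightarrow> bool" where
  "SST n P \<longleftrightarrow> set_pmf P \<subseteq> perms n \<and>
     (\<forall>i\<in>{1..n}. \<forall>j\<in>{1..n}. \<forall>k\<in>{1..n}.
        pw P i j \<ge> 1/2 \<and> pw P j k \<ge> 1/2 \<longrightarrow> pw P i k \<ge> 1/2) \<and>
     (\<forall>i\<in>{1..n}. \<forall>j\<in>{1..n}. i < j \<longrightarrow> pw P i j \<noteq> 1/2)"

definition sigma_star :: "nat \<Rightarrow> (nat \<Rightarrow> nat) pmf \<Rightarrow> nat \<Rightarrow> nat" where
  "sigma_star n P = (\<lambda>i. if i \<in> {1..n} then 1 + card {k\<in>{1..n}. k \<noteq> i \<and> pw P i k < 1/2} else i)"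

definition rules :: "'x measure \<Rightarrow> nat \<Rightarrow> ('x \<Rightarrow> nat \<Rightarrow> nat) set" where
  "rules Mx n = {s. s \<in> measurable Mx (count_space UNIV) \<and> (\<forall>x\<in>space Mx. s x \<in> perms n)}"

definition risk :: "nat \<Rightarrow> ('x \<times> (nat \<Rightarrow> nat)) measure \<Rightarrow> ('x \<Rightarrow> nat \<Rightarrow> nat) \<Rightarrow> real" where
  "risk n D s = (\<integral>z. dtau n (s (fst z)) (snd z) \<partial>D)"

definition risk_star :: "nat \<Rightarrow> 'x measure \<Rightarrow> ('x \<times> (nat \<Rightarrow> nat)) measure \<Rightarrow> real" where
  "risk_star n Mx D = (INF s\<in>rules Mx n. risk n D s)"

definition emp_risk :: "nat \<Rightarrow> nat \<Rightarrow> (nat \<Rightarrow> 'x \<times> (nat \<Rightarrow> nat)) \<Rightarrow> ('x \<Rightarrow> nat \<Rightarrow> nat) \<Rightarrow> real" where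
  "emp_risk n N \<omega> s = (1 / real N) * (\<Sum>k<N. dtau n (s (fst (\<omega> k))) (snd (\<omega> k)))"

end

theory Submission
  imports Defs
begin

text \<open>Under strict stochastic transitivity the Kemeny median of \<open>P\<^sub>x\<close> ranks every pair
  in the order preferred by the majority, so \<open>s\<^sup>*\<close> is Bayes optimal. On a single pair on which a
  rule \<open>s\<close> disagrees with \<open>s\<^sup>*\<close>, the excess loss \<open>W\<close> is \<open>+1\<close> with probability at least
  \<open>1/2 + H\<close> and \<open>-1\<close> otherwise, whence \<open>E exp (-\<lambda> W) \<le> 1 - H E W\<close> at \<open>\<lambda> = ln (1 + 2H)\<close>.
  Averaging over the \<open>M = n(n-1)/2\<close> pairs with Jensen gives the same inequality for the Kendall
  loss at \<open>\<lambda>/M\<close>. A Chernoff bound over the \<open>N\<close> independent observations then shows that a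
  rule with excess risk \<open>\<epsilon>\<close> beats \<open>s\<^sup>*\<close> empirically with probability at most
  \<open>exp (-N H \<epsilon> / M)\<close>, and a union bound over the \<open>C\<close> rules of \<open>S0\<close> concludes.\<close>

section \<open>Kendall distance as a sum over pairs\<close>

definition ordered_pairs :: "nat \<Rightarrow> (nat \<times> nat) set" where
  "ordered_pairs n = Sigma {1..n} (\<lambda>i. {i<..n})"

definition discordant :: "(nat \<Rightarrow> nat) \<Rightarrow> (nat \<Rightarrow> nat) \<Rightarrow> nat \<times> nat \<Rightarrow> real" where
  "discordant \<sigma> \<tau> = (\<lambda>(i, j).
     if (int (\<sigma> i) - int (\<sigma> j)) * (int (\<tau> i) - int (\<tau> j)) < 0 then 1 else 0)"

lemma finite_ordered_pairs [simp]: "finite (ordered_pairs n)"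
  unfolding ordered_pairs_def by simp

lemma mem_ordered_pairs: "(i, j) \<in> ordered_pairs n \<longleftrightarrow> 1 \<le> i \<and> i < j \<and> j \<le> n"
  unfolding ordered_pairs_def by auto

lemma ordered_pairs_nonempty: "2 \<le> n \<Longrightarrow> ordered_pairs n \<noteq> {}"
  using mem_ordered_pairs[of 1 2 n] by auto

lemma card_ordered_pairs: "2 * card (ordered_pairs n) = n * (n - 1)"
proof (induction n)
  case (Suc n)
  have "ordered_pairs (Suc n) = ordered_pairs n \<union> (\<lambda>i. (i, Suc n)) ` {1..n}"
    by (auto simp: ordered_pairs_def)
  then have "card (ordered_pairs (Suc n)) = card (ordered_pairs n) + n"
    by (simp only:) (subst card_Un_disjoint, auto simp: ordered_pairs_def card_image inj_on_def)
  with Suc.IH show ?case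
    by (cases n) (auto simp: algebra_simps)
qed (simp add: ordered_pairs_def)

lemma dtau_eq_sum_discordant: "dtau n \<sigma> \<tau> = (\<Sum>p\<in>ordered_pairs n. discordant \<sigma> \<tau> p)"
  unfolding dtau_def ordered_pairs_def discordant_def by (subst sum.Sigma) auto

lemma dtau_nonneg: "0 \<le> dtau n \<sigma> \<tau>"
  unfolding dtau_def by (intro sum_nonneg) auto

lemma dtau_le_card_ordered_pairs: "dtau n \<sigma> \<tau> \<le> card (ordered_pairs n)"
  unfolding dtau_eq_sum_discordant
  using sum_bounded_above[of "ordered_pairs n" "discordant \<sigma> \<tau>" 1]
  by (auto simp: discordant_def split: prod.splits)

lemma discordant_eq_if_distinct:
  assumes "\<sigma> i \<noteq> \<sigma> j" "\<tau> i \<noteq> \<tau> j"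
  shows "discordant \<sigma> \<tau> (i, j) = (if (\<sigma> i < \<sigma> j) = (\<tau> i < \<tau> j) then 0 else 1)"
  using assms unfolding discordant_def by (auto simp: mult_less_0_iff)

lemma borel_measurable_dtau:
  assumes [measurable]: "\<And>i. (\<lambda>z. f z i) \<in> M \<rightarrow>\<^sub>M count_space UNIV"
    "\<And>i. (\<lambda>z. g z i) \<in> M \<rightarrow>\<^sub>M count_space UNIV"
  shows "(\<lambda>z. dtau n (f z) (g z)) \<in> borel_measurable M"
proof -
  define h :: "nat \<Rightarrow> nat \<Rightarrow> nat \<Rightarrow> nat \<Rightarrow> real"
    where "h a b c d = (if (int a - int b) * (int c - int d) < 0 then 1 else 0)" for a b c d
  have "(\<lambda>z. h (f z i) (f z j) (g z i) (g z j)) \<in> borel_measurable M" for i j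
    by measurable
  then show ?thesis
    unfolding dtau_def h_def[symmetric] by (intro borel_measurable_sum) assumption
qed

section \<open>Pairwise majorities and the Kemeny median\<close>

lemma finite_perms [simp]: "finite (perms n)"
  unfolding perms_def using finite_permutations[of "{1..n}"] by simp

lemma perms_neq:
  "\<sigma> \<in> perms n \<Longrightarrow> i \<in> {1..n} \<Longrightarrow> j \<in> {1..n} \<Longrightarrow> i \<noteq> j \<Longrightarrow> \<sigma> i \<noteq> \<sigma> j"
  unfolding perms_def by (auto dest: permutes_inj inj_onD)

lemma rules_perms: "s \<in> rules Mx n \<Longrightarrow> x \<in> space Mx \<Longrightarrow> s x \<in> perms n"
  unfolding rules_def by auto

lemma pw_swap:
  assumes "set_pmf P \<subseteq> perms n" "i \<in> {1..n}" "j \<in> {1..n}" "i \<noteq> j"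
  shows "pw P j i = 1 - pw P i j"
proof -
  have "pw P j i = measure_pmf.prob P (UNIV - {\<sigma>. \<sigma> i < \<sigma> j})"
    unfolding pw_def
  proof (rule measure_pmf.finite_measure_eq_AE)
    have "\<sigma> j < \<sigma> i \<longleftrightarrow> \<not> \<sigma> i < \<sigma> j" if "\<sigma> \<in> set_pmf P" for \<sigma>
      using perms_neq[of \<sigma> n i j] assms that by auto
    then show "AE \<sigma> in measure_pmf P. (\<sigma> \<in> {\<sigma>. \<sigma> j < \<sigma> i}) = (\<sigma> \<in> UNIV - {\<sigma>. \<sigma> i < \<sigma> j})"
      by (simp add: AE_measure_pmf_iff)
  qed auto
  also have "\<dots> = 1 - pw P i j"
    unfolding pw_def by (subst measure_pmf.prob_compl[symmetric]) auto
  finally show ?thesis .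
qed

lemma SST_pw_neq_half:
  assumes "SST n P" "i \<in> {1..n}" "j \<in> {1..n}" "i \<noteq> j"
  shows "pw P i j \<noteq> 1/2"
proof (cases "i < j")
  case False
  then have "pw P j i \<noteq> 1/2" using assms unfolding SST_def by auto
  moreover have "pw P j i = 1 - pw P i j" using pw_swap assms unfolding SST_def by blast
  ultimately show ?thesis by auto
qed (use assms in \<open>auto simp: SST_def\<close>)

lemma sigma_star_less:
  assumes sst: "SST n P" and ij: "i \<in> {1..n}" "j \<in> {1..n}" "i \<noteq> j"
    and beats: "pw P j i > 1/2"
  shows "sigma_star n P j < sigma_star n P i"
proof -
  have P: "set_pmf P \<subseteq> perms n" using sst unfolding SST_def by auto
  define losses where "losses k = {k' \<in> {1..n}. k' \<noteq> k \<and> pw P k k' < 1/2}" for k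
  have pij: "pw P i j < 1/2" using pw_swap[OF P ij(2,1)] ij beats by auto
  \<comment> \<open>by transitivity, every item that beats \<open>j\<close> also beats \<open>i\<close>\<close>
  have "insert j (losses j) \<subseteq> losses i"
  proof
    fix k assume k: "k \<in> insert j (losses j)"
    show "k \<in> losses i"
    proof (cases "k = j")
      case False
      then have k1: "k \<in> {1..n}" "pw P j k < 1/2" using k unfolding losses_def by auto
      have pkj: "pw P k j > 1/2" using pw_swap[OF P ij(2) k1(1)] k1 False by auto
      have ki: "k \<noteq> i" using pkj pij by auto
      have "pw P k i \<ge> 1/2"
        using sst k1(1) ij pkj beats unfolding SST_def by (meson less_eq_real_def)
      with SST_pw_neq_half[OF sst k1(1) ij(1) ki] have "pw P k i > 1/2" by auto
      then have "pw P i k < 1/2" using pw_swap[OF P k1(1) ij(1) ki] by auto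
      then show ?thesis using k1 ki unfolding losses_def by auto
    qed (use pij ij in \<open>auto simp: losses_def\<close>)
  qed
  then have "card (insert j (losses j)) \<le> card (losses i)"
    by (intro card_mono) (simp add: losses_def)
  moreover have "j \<notin> losses j" "finite (losses j)" unfolding losses_def by auto
  ultimately have "card (losses j) < card (losses i)" by simp
  then show ?thesis using ij unfolding sigma_star_def losses_def by auto
qed

lemma sigma_star_less_iff:
  assumes sst: "SST n P" and ij: "i \<in> {1..n}" "j \<in> {1..n}" "i \<noteq> j"
  shows "sigma_star n P i < sigma_star n P j \<longleftrightarrow> pw P i j > 1/2"
proof
  assume less: "sigma_star n P i < sigma_star n P j"
  have P: "set_pmf P \<subseteq> perms n" using sst unfolding SST_def by auto
  show "pw P i j > 1/2"
  proof (rule ccontr)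
    assume "\<not> pw P i j > 1/2"
    with SST_pw_neq_half[OF sst ij] have "pw P j i > 1/2" using pw_swap[OF P ij] by auto
    then show False using sigma_star_less[OF sst ij] less by auto
  qed
qed (use sigma_star_less[OF sst ij(2,1)] ij in auto)

section \<open>Exponential moments of the excess loss\<close>

lemma two_point_exp_moment_bound:
  fixes H q :: real
  assumes "0 < H" "H \<le> q - 1/2"
  shows "q / (1 + 2*H) + (1 + 2*H) * (1 - q) \<le> 1 - H * (2*q - 1)"
proof -
  have "q / (1 + 2*H) + (1 + 2*H) * (1 - q) - (1 - H * (2*q - 1)) = - 2*H * (q - 1/2 - H) / (1 + 2*H)"
    using assms by (simp add: field_simps)
  also have "\<dots> \<le> 0"
    using assms by (intro divide_nonpos_pos) (auto simp: mult_nonneg_nonneg)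
  finally show ?thesis by simp
qed

lemma expectation_pmf_if_less:
  assumes "\<And>\<tau>. \<tau> \<in> set_pmf P \<Longrightarrow> f \<tau> = (if \<tau> i < \<tau> j then a else b)"
  shows "measure_pmf.expectation P f = a * pw P i j + b * (1 - pw P i j)"
proof -
  have "measure_pmf.expectation P f
      = measure_pmf.expectation P (\<lambda>\<tau>. b + (a - b) * indicator {\<tau>. \<tau> i < \<tau> j} \<tau>)"
    using assms by (intro integral_cong_AE) (auto simp: AE_measure_pmf_iff)
  also have "\<dots> = b + (a - b) * pw P i j"
    unfolding pw_def by (simp add: measure_pmf.emeasure_eq_measure)
  finally show ?thesis by (simp add: algebra_simps)
qed

lemma pair_excess_bounds:
  assumes P: "set_pmf P \<subseteq> perms n" and ij: "i \<in> {1..n}" "j \<in> {1..n}" "i \<noteq> j"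
    and \<sigma>: "\<sigma> \<in> perms n" and \<sigma>\<^sub>0: "\<sigma>\<^sub>0 \<in> perms n"
    and majority: "\<sigma>\<^sub>0 i < \<sigma>\<^sub>0 j \<longleftrightarrow> pw P i j > 1/2"
    and margin: "0 < H" "H \<le> \<bar>pw P i j - 1/2\<bar>"
  defines "W \<equiv> \<lambda>\<tau>. discordant \<sigma> \<tau> (i, j) - discordant \<sigma>\<^sub>0 \<tau> (i, j)"
  shows "0 \<le> measure_pmf.expectation P W"
    and "measure_pmf.expectation P (\<lambda>\<tau>. exp (- ln (1 + 2*H) * W \<tau>))
           \<le> 1 - H * measure_pmf.expectation P W"
proof -
  define q where "q = pw P i j"
  define a :: real where "a = (if \<sigma> i < \<sigma> j then 0 else 1) - (if \<sigma>\<^sub>0 i < \<sigma>\<^sub>0 j then 0 else 1)"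
  define b :: real where "b = (if \<sigma> i < \<sigma> j then 1 else 0) - (if \<sigma>\<^sub>0 i < \<sigma>\<^sub>0 j then 1 else 0)"
  define \<mu> where "\<mu> = ln (1 + 2*H)"
  have W: "W \<tau> = (if \<tau> i < \<tau> j then a else b)" if "\<tau> \<in> set_pmf P" for \<tau>
  proof -
    have "\<tau> i \<noteq> \<tau> j" "\<sigma> i \<noteq> \<sigma> j" "\<sigma>\<^sub>0 i \<noteq> \<sigma>\<^sub>0 j"
      using perms_neq ij \<sigma> \<sigma>\<^sub>0 that P by blast+
    then show ?thesis
      unfolding W_def a_def b_def by (simp add: discordant_eq_if_distinct)
  qed
  have EW: "measure_pmf.expectation P W = a * q + b * (1 - q)"
    unfolding q_def by (rule expectation_pmf_if_less) (rule W)
  have EE: "measure_pmf.expectation P (\<lambda>\<tau>. exp (- \<mu> * W \<tau>)) = exp (- \<mu> * a) * q + exp (- \<mu> * b) * (1 - q)"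
    unfolding q_def by (rule expectation_pmf_if_less) (simp add: W)
  have exp_\<mu>: "exp \<mu> = 1 + 2*H" "exp (- \<mu>) = 1 / (1 + 2*H)"
    using margin unfolding \<mu>_def by (auto simp: exp_minus inverse_eq_divide)
  have "0 \<le> a * q + b * (1 - q) \<and> exp (- \<mu> * a) * q + exp (- \<mu> * b) * (1 - q) \<le> 1 - H * (a * q + b * (1 - q))"
  proof (cases "(\<sigma> i < \<sigma> j) = (\<sigma>\<^sub>0 i < \<sigma>\<^sub>0 j)")
    case True
    then show ?thesis unfolding a_def b_def by auto
  next
    case False
    show ?thesis
    proof (cases "\<sigma>\<^sub>0 i < \<sigma>\<^sub>0 j")
      case True
      with False majority margin have "a = 1" "b = -1" "H \<le> q - 1/2"
        unfolding a_def b_def q_def by auto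
      then show ?thesis
        using two_point_exp_moment_bound[of H q] margin exp_\<mu> by (auto simp: algebra_simps)
    next
      case False': False
      with False majority margin have "a = -1" "b = 1" "H \<le> (1 - q) - 1/2"
        unfolding a_def b_def q_def by auto
      then show ?thesis
        using two_point_exp_moment_bound[of H "1 - q"] margin exp_\<mu> by (auto simp: algebra_simps)
    qed
  qed
  then show "0 \<le> measure_pmf.expectation P W"
    and "measure_pmf.expectation P (\<lambda>\<tau>. exp (- ln (1 + 2*H) * W \<tau>)) \<le> 1 - H * measure_pmf.expectation P W"
    using EW EE unfolding \<mu>_def by auto
qed

lemma exp_mean_le_mean_exp:
  fixes f :: "'a \<Rightarrow> real"
  assumes "finite A" "A \<noteq> {}"
  shows "exp ((\<Sum>a\<in>A. f a) / card A) \<le> (\<Sum>a\<in>A. exp (f a)) / card A"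
proof -
  have "exp (\<Sum>a\<in>A. (1 / card A) *\<^sub>R f a) \<le> (\<Sum>a\<in>A. (1 / card A) * exp (f a))"
    using assms convex_on_exp[of 1]
    by (intro convex_on_sum[where C = UNIV]) (auto simp: card_gt_0_iff)
  then show ?thesis
    by (simp add: sum_divide_distrib[symmetric] sum_distrib_left[symmetric])
qed

lemma expectation_exp_mean_le:
  fixes W :: "'i \<Rightarrow> 'a \<Rightarrow> real"
  assumes I: "finite I" "I \<noteq> {}" and P: "finite (set_pmf P)"
  shows "measure_pmf.expectation P (\<lambda>\<tau>. exp ((\<Sum>p\<in>I. W p \<tau>) / card I))
           \<le> (\<Sum>p\<in>I. measure_pmf.expectation P (\<lambda>\<tau>. exp (W p \<tau>))) / card I"
proof -
  note int = integrable_measure_pmf_finite[OF P]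
  have "measure_pmf.expectation P (\<lambda>\<tau>. exp ((\<Sum>p\<in>I. W p \<tau>) / card I))
      \<le> measure_pmf.expectation P (\<lambda>\<tau>. (\<Sum>p\<in>I. exp (W p \<tau>)) / card I)"
    by (rule integral_mono[OF int int exp_mean_le_mean_exp[OF I]])
  also have "\<dots> = (\<Sum>p\<in>I. measure_pmf.expectation P (\<lambda>\<tau>. exp (W p \<tau>))) / card I"
    by (subst integral_divide_zero, subst Bochner_Integration.integral_sum) (auto intro: int)
  finally show ?thesis .
qed

lemma kendall_excess_bounds:
  assumes P: "set_pmf P \<subseteq> perms n" and n: "2 \<le> n"
    and \<sigma>: "\<sigma> \<in> perms n" and \<sigma>\<^sub>0: "\<sigma>\<^sub>0 \<in> perms n"
    and majority: "\<And>i j. (i, j) \<in> ordered_pairs n \<Longrightarrow> \<sigma>\<^sub>0 i < \<sigma>\<^sub>0 j \<longleftrightarrow> pw P i j > 1/2"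
    and margin: "0 < H" "\<And>i j. (i, j) \<in> ordered_pairs n \<Longrightarrow> H \<le> \<bar>pw P i j - 1/2\<bar>"
  defines "M \<equiv> real (card (ordered_pairs n))"
    and "\<Delta> \<equiv> measure_pmf.expectation P (dtau n \<sigma>) - measure_pmf.expectation P (dtau n \<sigma>\<^sub>0)"
  shows "0 \<le> \<Delta>"
    and "measure_pmf.expectation P (\<lambda>\<tau>. exp (- (ln (1 + 2*H) / M) * (dtau n \<sigma> \<tau> - dtau n \<sigma>\<^sub>0 \<tau>)))
           \<le> 1 - (H / M) * \<Delta>"
proof -
  define \<mu> where "\<mu> = ln (1 + 2*H)"
  define W where "W p \<tau> = discordant \<sigma> \<tau> p - discordant \<sigma>\<^sub>0 \<tau> p" for p \<tau>
  have fin: "finite (set_pmf P)" by (rule finite_subset[OF P finite_perms])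
  note int = integrable_measure_pmf_finite[OF fin]
  have M_pos: "M > 0" unfolding M_def using ordered_pairs_nonempty[OF n] by (simp add: card_gt_0_iff)
  have dtau_diff: "dtau n \<sigma> \<tau> - dtau n \<sigma>\<^sub>0 \<tau> = (\<Sum>p\<in>ordered_pairs n. W p \<tau>)" for \<tau>
    unfolding dtau_eq_sum_discordant W_def by (simp add: sum_subtractf)
  have pair: "0 \<le> measure_pmf.expectation P (W p)"
    "measure_pmf.expectation P (\<lambda>\<tau>. exp (- \<mu> * W p \<tau>)) \<le> 1 - H * measure_pmf.expectation P (W p)"
    if "p \<in> ordered_pairs n" for p
  proof -
    obtain i j where p: "p = (i, j)" by force
    with that have ij: "i \<in> {1..n}" "j \<in> {1..n}" "i \<noteq> j"
      by (auto simp: mem_ordered_pairs)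
    show "0 \<le> measure_pmf.expectation P (W p)"
      "measure_pmf.expectation P (\<lambda>\<tau>. exp (- \<mu> * W p \<tau>)) \<le> 1 - H * measure_pmf.expectation P (W p)"
      using pair_excess_bounds[OF P ij \<sigma> \<sigma>\<^sub>0 majority margin(1)] that margin(2)
      unfolding p W_def \<mu>_def by auto
  qed
  have \<Delta>_eq: "\<Delta> = (\<Sum>p\<in>ordered_pairs n. measure_pmf.expectation P (W p))"
  proof -
    have "\<Delta> = measure_pmf.expectation P (\<lambda>\<tau>. dtau n \<sigma> \<tau> - dtau n \<sigma>\<^sub>0 \<tau>)"
      unfolding \<Delta>_def by (rule Bochner_Integration.integral_diff[symmetric]) (auto intro: int)
    also have "\<dots> = (\<Sum>p\<in>ordered_pairs n. measure_pmf.expectation P (W p))"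
      unfolding dtau_diff by (rule Bochner_Integration.integral_sum) (auto intro: int)
    finally show ?thesis .
  qed
  show "0 \<le> \<Delta>"
    unfolding \<Delta>_eq by (intro sum_nonneg pair(1))
  have "- (\<mu> / M) * (dtau n \<sigma> \<tau> - dtau n \<sigma>\<^sub>0 \<tau>) = (\<Sum>p\<in>ordered_pairs n. - \<mu> * W p \<tau>) / M" for \<tau>
    unfolding dtau_diff by (simp add: sum_distrib_left sum_negf sum_divide_distrib)
  \<comment> \<open>Jensen over the \<open>M\<close> pairs: this is where the factor \<open>M = n(n-1)/2\<close> of the rate comes from\<close>
  then have "measure_pmf.expectation P (\<lambda>\<tau>. exp (- (\<mu> / M) * (dtau n \<sigma> \<tau> - dtau n \<sigma>\<^sub>0 \<tau>)))
      \<le> (\<Sum>p\<in>ordered_pairs n. measure_pmf.expectation P (\<lambda>\<tau>. exp (- \<mu> * W p \<tau>))) / M"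
    using expectation_exp_mean_le[OF finite_ordered_pairs ordered_pairs_nonempty[OF n] fin,
        of "\<lambda>p \<tau>. - \<mu> * W p \<tau>"]
    unfolding M_def by simp
  also have "\<dots> \<le> (\<Sum>p\<in>ordered_pairs n. 1 - H * measure_pmf.expectation P (W p)) / M"
    using M_pos by (intro divide_right_mono sum_mono pair(2)) auto
  also have "\<dots> = 1 - (H / M) * \<Delta>"
    using M_pos unfolding \<Delta>_eq
    by (simp add: sum_subtractf sum_distrib_left[symmetric] M_def diff_divide_distrib ordered_pairs_nonempty[OF n])
  finally show "measure_pmf.expectation P (\<lambda>\<tau>. exp (- (ln (1 + 2*H) / M) * (dtau n \<sigma> \<tau> - dtau n \<sigma>\<^sub>0 \<tau>)))
      \<le> 1 - (H / M) * \<Delta>"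
    unfolding \<mu>_def .
qed

section \<open>Chernoff bound for independent samples\<close>

lemma prob_sum_nonpos_le_mgf_power:
  fixes D :: "'a measure" and Z :: "'a \<Rightarrow> real"
  assumes D: "prob_space D" and Z [measurable]: "Z \<in> borel_measurable D"
    and bounded: "\<And>z. \<bar>Z z\<bar> \<le> B" and l: "0 \<le> l"
  shows "measure (Pi\<^sub>M {..<N} (\<lambda>_. D)) {\<omega> \<in> space (Pi\<^sub>M {..<N} (\<lambda>_. D)). (\<Sum>k<N. Z (\<omega> k)) \<le> 0}
           \<le> (\<integral>z. exp (- l * Z z) \<partial>D) ^ N"
proof -
  define PM where "PM = Pi\<^sub>M {..<N} (\<lambda>_. D)"
  define A where "A = {\<omega> \<in> space PM. (\<Sum>k<N. Z (\<omega> k)) \<le> 0}"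
  define u where "u \<omega> = (\<Prod>k<N. exp (- l * Z (\<omega> k)))" for \<omega>
  interpret D: prob_space D by (rule D)
  interpret PM: prob_space PM unfolding PM_def by (intro prob_space_PiM D)
  interpret product_sigma_finite "\<lambda>_. D"
    unfolding product_sigma_finite_def using prob_space_imp_sigma_finite[OF D] by simp
  have exp_bounded: "\<bar>exp (- l * Z z)\<bar> \<le> exp (l * B)" for z
  proof -
    have "- l * Z z \<le> l * B"
      using mult_left_mono[OF abs_le_D2[OF bounded[of z]] l] by simp
    then show ?thesis by simp
  qed
  have integrable_exp: "integrable D (\<lambda>z. exp (- l * Z z))"
    by (rule D.integrable_const_bound[where B = "exp (l * B)"]) (use exp_bounded in auto)
  have A_sets: "A \<in> sets PM"
    unfolding A_def PM_def by measurable
  have u_meas: "u \<in> borel_measurable PM"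
    unfolding u_def PM_def by measurable
  have integrable_u: "integrable PM u"
  proof (rule PM.integrable_const_bound[where B = "exp (l * B) ^ N"])
    have "\<bar>u \<omega>\<bar> \<le> exp (l * B) ^ N" for \<omega>
    proof -
      have "\<bar>u \<omega>\<bar> = (\<Prod>k<N. \<bar>exp (- l * Z (\<omega> k))\<bar>)"
        unfolding u_def by (simp add: abs_prod)
      also have "\<dots> \<le> (\<Prod>k<N. exp (l * B))"
        by (intro prod_mono) (use exp_bounded in auto)
      finally show ?thesis by simp
    qed
    then show "AE \<omega> in PM. norm (u \<omega>) \<le> exp (l * B) ^ N" by simp
  qed (rule u_meas)
  have indicator_le_u: "indicator A \<omega> \<le> u \<omega>" for \<omega>
  proof (cases "\<omega> \<in> A")
    case True
    then have "0 \<le> - l * (\<Sum>k<N. Z (\<omega> k))"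
      using l unfolding A_def by (simp add: mult_nonneg_nonpos)
    then have "1 \<le> exp (\<Sum>k<N. - l * Z (\<omega> k))"
      by (simp add: sum_distrib_left)
    then show ?thesis
      using True unfolding u_def by (simp add: exp_sum)
  qed (simp add: u_def prod_nonneg)
  have "measure PM A = (\<integral>\<omega>. indicator A \<omega> \<partial>PM)"
    using A_sets by simp
  also have "\<dots> \<le> (\<integral>\<omega>. u \<omega> \<partial>PM)"
    using A_sets by (intro integral_mono[OF _ integrable_u indicator_le_u]) (simp add: PM.emeasure_eq_measure)
  also have "\<dots> = (\<Prod>k<N. \<integral>z. exp (- l * Z z) \<partial>D)"
    unfolding u_def PM_def by (rule product_integral_prod) (use integrable_exp in auto)
  finally show ?thesis
    unfolding A_def PM_def by simp
qed

section \<open>Disintegration along the conditional law\<close>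

text \<open>\<open>K x\<close> is the conditional law \<open>P\<^sub>x\<close> of \<open>\<Sigma>\<close> given \<open>X = x\<close>, and \<open>PX\<close> the law of \<open>X\<close>.\<close>

locale ranking_model =
  fixes Mx :: "'x measure" and D :: "('x \<times> (nat \<Rightarrow> nat)) measure"
    and K :: "'x \<Rightarrow> (nat \<Rightarrow> nat) pmf" and n :: nat
  assumes prob_space_D: "prob_space D"
    and sets_D: "sets D = sets (Mx \<Otimes>\<^sub>M count_space UNIV)"
    and measurable_K: "\<And>\<sigma>. (\<lambda>x. pmf (K x) \<sigma>) \<in> borel_measurable Mx"
    and emeasure_D_times_singleton: "\<And>A \<sigma>. A \<in> sets Mx \<Longrightarrow>
        emeasure D (A \<times> {\<sigma>}) = (\<integral>\<^sup>+ x\<in>A. ennreal (pmf (K x) \<sigma>) \<partial>(distr D Mx fst))"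
    and set_pmf_K: "\<And>x. x \<in> space Mx \<Longrightarrow> set_pmf (K x) \<subseteq> perms n"
begin

abbreviation PX :: "'x measure" where
  "PX \<equiv> distr D Mx fst"

lemma space_D: "space D = space Mx \<times> UNIV"
  using sets_eq_imp_space_eq[OF sets_D] by (simp add: space_pair_measure)

lemma measurable_fst_D [measurable]: "fst \<in> D \<rightarrow>\<^sub>M Mx"
  using measurable_fst[of Mx "count_space UNIV"] measurable_cong_sets[OF sets_D refl] by blast

lemma measurable_snd_D [measurable]: "snd \<in> D \<rightarrow>\<^sub>M count_space UNIV"
  using measurable_snd[of Mx "count_space UNIV"] measurable_cong_sets[OF sets_D refl] by blast

lemmas [measurable] = measurable_K

lemma prob_space_PX: "prob_space PX"
  by (rule prob_space.prob_space_distr[OF prob_space_D measurable_fst_D])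

lemma nn_integral_indicator_snd_eq:
  assumes g [measurable]: "g \<in> borel_measurable Mx"
  shows "(\<integral>\<^sup>+ z. g (fst z) * indicator {z. snd z = \<tau>} z \<partial>D) = (\<integral>\<^sup>+ x. g x * pmf (K x) \<tau> \<partial>PX)"
proof -
  define Q where "Q = density D (indicator {z. snd z = \<tau>})"
  have "distr Q Mx fst = density PX (\<lambda>x. pmf (K x) \<tau>)"
  proof (rule measure_eqI)
    fix A assume "A \<in> sets (distr Q Mx fst)"
    then have A: "A \<in> sets Mx" by simp
    have fst_A: "fst -` A \<inter> space D \<in> sets D"
      using A by measurable
    have "emeasure (distr Q Mx fst) A = emeasure Q (fst -` A \<inter> space D)"
      using A unfolding Q_def by (simp add: emeasure_distr)
    also have "\<dots> = (\<integral>\<^sup>+ z. indicator {z. snd z = \<tau>} z * indicator (fst -` A \<inter> space D) z \<partial>D)"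
      unfolding Q_def using fst_A by (simp add: emeasure_density)
    also have "\<dots> = (\<integral>\<^sup>+ z. indicator (A \<times> {\<tau>}) z \<partial>D)"
      using sets.sets_into_space[OF A]
      by (intro nn_integral_cong) (auto simp: space_D split: split_indicator)
    also have "\<dots> = emeasure D (A \<times> {\<tau>})"
      using A sets_D by (simp add: pair_measureI)
    also have "\<dots> = emeasure (density PX (\<lambda>x. pmf (K x) \<tau>)) A"
      using A measurable_K by (simp add: emeasure_D_times_singleton emeasure_density mult.commute)
    finally show "emeasure (distr Q Mx fst) A = emeasure (density PX (\<lambda>x. pmf (K x) \<tau>)) A" .
  qed simp
  then have "(\<integral>\<^sup>+ x. g x \<partial>distr Q Mx fst) = (\<integral>\<^sup>+ x. g x \<partial>density PX (\<lambda>x. pmf (K x) \<tau>))"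
    by simp
  then show ?thesis
    unfolding Q_def using measurable_K
    by (simp add: nn_integral_distr nn_integral_density mult.commute)
qed

lemma sum_indicator_snd_eq:
  "(\<Sum>\<tau>\<in>perms n. f \<tau> * indicator {z. snd z = \<tau>} z) = (if snd z \<in> perms n then f (snd z) else 0 :: ennreal)"
proof -
  have "(\<Sum>\<tau>\<in>perms n. f \<tau> * indicator {z. snd z = \<tau>} z) = (\<Sum>\<tau>\<in>perms n. if snd z = \<tau> then f \<tau> else 0)"
    by (intro sum.cong) (auto split: split_indicator)
  then show ?thesis by (simp add: sum.delta)
qed

lemma AE_snd_perms: "AE z in D. snd z \<in> perms n"
proof -
  interpret D: prob_space D by (rule prob_space_D)
  interpret PX: prob_space PX by (rule prob_space_PX)
  have S: "{z \<in> space D. snd z \<in> perms n} \<in> sets D"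
    using measurable_sets[OF measurable_snd_D, of "perms n"] by (simp add: vimage_def Int_def conj_commute)
  have "emeasure D {z \<in> space D. snd z \<in> perms n}
      = (\<integral>\<^sup>+ z. indicator {z \<in> space D. snd z \<in> perms n} z \<partial>D)"
    using S by simp
  also have "\<dots> = (\<integral>\<^sup>+ z. (\<Sum>\<tau>\<in>perms n. 1 * indicator {z. snd z = \<tau>} z) \<partial>D)"
    unfolding sum_indicator_snd_eq by (intro nn_integral_cong) (simp add: indicator_def)
  also have "\<dots> = (\<Sum>\<tau>\<in>perms n. \<integral>\<^sup>+ z. 1 * indicator {z. snd z = \<tau>} z \<partial>D)"
    by (rule nn_integral_sum) auto
  also have "\<dots> = (\<Sum>\<tau>\<in>perms n. \<integral>\<^sup>+ x. ennreal (pmf (K x) \<tau>) \<partial>PX)"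
    using nn_integral_indicator_snd_eq[of "\<lambda>_. 1"] by simp
  also have "\<dots> = (\<integral>\<^sup>+ x. ennreal (\<Sum>\<tau>\<in>perms n. pmf (K x) \<tau>) \<partial>PX)"
    by (subst nn_integral_sum[symmetric]) (auto simp: measurable_K)
  also have "\<dots> = (\<integral>\<^sup>+ x. 1 \<partial>PX)"
    by (intro nn_integral_cong) (simp add: sum_pmf_eq_1 set_pmf_K)
  also have "\<dots> = 1"
    using PX.emeasure_space_1 by simp
  finally have "D.prob {z \<in> space D. snd z \<in> perms n} = 1"
    by (simp add: D.emeasure_eq_measure)
  then show ?thesis
    using D.prob_Collect_eq_1[OF S] by simp
qed

lemma nn_integral_disintegration:
  fixes F :: "'x \<Rightarrow> (nat \<Rightarrow> nat) \<Rightarrow> real"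
  assumes F_nonneg: "\<And>x \<tau>. 0 \<le> F x \<tau>" and F_meas [measurable]: "\<And>\<tau>. (\<lambda>x. F x \<tau>) \<in> borel_measurable Mx"
  shows "(\<integral>\<^sup>+ z. ennreal (F (fst z) (snd z)) \<partial>D)
           = (\<integral>\<^sup>+ x. ennreal (\<Sum>\<tau>\<in>perms n. pmf (K x) \<tau> * F x \<tau>) \<partial>PX)"
proof -
  have "(\<integral>\<^sup>+ z. ennreal (F (fst z) (snd z)) \<partial>D)
      = (\<integral>\<^sup>+ z. (\<Sum>\<tau>\<in>perms n. ennreal (F (fst z) \<tau>) * indicator {z. snd z = \<tau>} z) \<partial>D)"
    using AE_snd_perms
    by (intro nn_integral_cong_AE) (auto elim!: eventually_mono simp: sum_indicator_snd_eq)
  also have "\<dots> = (\<Sum>\<tau>\<in>perms n. \<integral>\<^sup>+ z. ennreal (F (fst z) \<tau>) * indicator {z. snd z = \<tau>} z \<partial>D)"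
    by (rule nn_integral_sum) auto
  also have "\<dots> = (\<Sum>\<tau>\<in>perms n. \<integral>\<^sup>+ x. ennreal (F x \<tau>) * ennreal (pmf (K x) \<tau>) \<partial>PX)"
    by (intro sum.cong refl nn_integral_indicator_snd_eq) measurable
  also have "\<dots> = (\<integral>\<^sup>+ x. (\<Sum>\<tau>\<in>perms n. ennreal (F x \<tau>) * ennreal (pmf (K x) \<tau>)) \<partial>PX)"
    by (rule nn_integral_sum[symmetric]) (auto simp: measurable_K)
  also have "\<dots> = (\<integral>\<^sup>+ x. ennreal (\<Sum>\<tau>\<in>perms n. pmf (K x) \<tau> * F x \<tau>) \<partial>PX)"
    by (intro nn_integral_cong) (simp add: ennreal_mult[symmetric] F_nonneg mult.commute)
  finally show ?thesis .
qed

lemma expectation_K_eq_sum: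
  "x \<in> space Mx \<Longrightarrow> measure_pmf.expectation (K x) f = (\<Sum>\<tau>\<in>perms n. pmf (K x) \<tau> * f \<tau>)"
  using integral_measure_pmf[OF finite_perms, of "K x" f] set_pmf_K by auto

lemma borel_measurable_expectation_K:
  fixes F :: "'x \<Rightarrow> (nat \<Rightarrow> nat) \<Rightarrow> real"
  assumes "\<And>\<tau>. (\<lambda>x. F x \<tau>) \<in> borel_measurable Mx"
  shows "(\<lambda>x. measure_pmf.expectation (K x) (F x)) \<in> borel_measurable Mx"
  using assms measurable_K
  by (subst measurable_cong[where g = "\<lambda>x. \<Sum>\<tau>\<in>perms n. pmf (K x) \<tau> * F x \<tau>"])
     (auto simp: expectation_K_eq_sum)

lemma integrable_expectation_K:
  fixes F :: "'x \<Rightarrow> (nat \<Rightarrow> nat) \<Rightarrow> real"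
  assumes "\<And>\<tau>. (\<lambda>x. F x \<tau>) \<in> borel_measurable Mx" and bounded: "\<And>x \<tau>. \<bar>F x \<tau>\<bar> \<le> B"
  shows "integrable PX (\<lambda>x. measure_pmf.expectation (K x) (F x))"
proof -
  interpret PX: prob_space PX by (rule prob_space_PX)
  have "\<bar>measure_pmf.expectation (K x) (F x)\<bar> \<le> B" if "x \<in> space Mx" for x
  proof -
    have "\<bar>measure_pmf.expectation (K x) (F x)\<bar> \<le> (\<Sum>\<tau>\<in>perms n. pmf (K x) \<tau> * B)"
      unfolding expectation_K_eq_sum[OF that]
      by (rule order_trans[OF sum_abs]) (auto simp: abs_mult intro!: sum_mono mult_left_mono bounded)
    also have "\<dots> = B"
      using that by (simp add: sum_distrib_right[symmetric] sum_pmf_eq_1 set_pmf_K)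
    finally show ?thesis .
  qed
  then show ?thesis
    using assms borel_measurable_expectation_K by (intro PX.integrable_const_bound[where B = B]) auto
qed

lemma integral_disintegration:
  fixes F :: "'x \<Rightarrow> (nat \<Rightarrow> nat) \<Rightarrow> real"
  assumes F_nonneg: "\<And>x \<tau>. 0 \<le> F x \<tau>" and F_meas: "\<And>\<tau>. (\<lambda>x. F x \<tau>) \<in> borel_measurable Mx"
    and F_meas_D: "(\<lambda>z. F (fst z) (snd z)) \<in> borel_measurable D"
  shows "(\<integral>z. F (fst z) (snd z) \<partial>D) = (\<integral>x. measure_pmf.expectation (K x) (F x) \<partial>PX)"
proof -
  have sum_meas: "(\<lambda>x. \<Sum>\<tau>\<in>perms n. pmf (K x) \<tau> * F x \<tau>) \<in> borel_measurable PX"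
    using measurable_K F_meas by auto
  have "(\<integral>z. F (fst z) (snd z) \<partial>D) = enn2real (\<integral>\<^sup>+ z. ennreal (F (fst z) (snd z)) \<partial>D)"
    by (rule integral_eq_nn_integral[OF F_meas_D]) (simp add: F_nonneg)
  also have "\<dots> = enn2real (\<integral>\<^sup>+ x. ennreal (\<Sum>\<tau>\<in>perms n. pmf (K x) \<tau> * F x \<tau>) \<partial>PX)"
    using nn_integral_disintegration[OF F_nonneg F_meas] by (rule arg_cong)
  also have "\<dots> = (\<integral>x. (\<Sum>\<tau>\<in>perms n. pmf (K x) \<tau> * F x \<tau>) \<partial>PX)"
    by (rule integral_eq_nn_integral[symmetric, OF sum_meas]) (simp add: F_nonneg sum_nonneg)
  also have "\<dots> = (\<integral>x. measure_pmf.expectation (K x) (F x) \<partial>PX)"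
    by (intro Bochner_Integration.integral_cong) (simp_all add: expectation_K_eq_sum)
  finally show ?thesis .
qed

lemma borel_measurable_dtau_rule:
  assumes "s \<in> rules Mx n"
  shows "(\<lambda>z. dtau n (s (fst z)) (snd z)) \<in> borel_measurable D"
    and "(\<lambda>x. dtau n (s x) \<tau>) \<in> borel_measurable Mx"
proof -
  have [measurable]: "s \<in> Mx \<rightarrow>\<^sub>M count_space UNIV"
    using assms unfolding rules_def by auto
  have [measurable]: "(\<lambda>\<sigma>. \<sigma> i) \<in> count_space UNIV \<rightarrow>\<^sub>M (count_space UNIV :: nat measure)" for i
    by simp
  show "(\<lambda>z. dtau n (s (fst z)) (snd z)) \<in> borel_measurable D"
    by (intro borel_measurable_dtau) measurable
  show "(\<lambda>x. dtau n (s x) \<tau>) \<in> borel_measurable Mx"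
    by (intro borel_measurable_dtau) measurable
qed

lemma risk_eq_integral_expectation:
  "s \<in> rules Mx n \<Longrightarrow> risk n D s = (\<integral>x. measure_pmf.expectation (K x) (dtau n (s x)) \<partial>PX)"
  unfolding risk_def by (rule integral_disintegration) (auto simp: dtau_nonneg borel_measurable_dtau_rule)

end

section \<open>Excess risk of empirical risk minimizers\<close>

locale sst_margin_model = ranking_model Mx D K n for Mx :: "'x measure" and D K n +
  fixes H :: real and s\<^sub>0 :: "'x \<Rightarrow> nat \<Rightarrow> nat"
  assumes two_le_n: "2 \<le> n" and H_pos: "0 < H"
    and margin: "\<And>x i j. x \<in> space Mx \<Longrightarrow> (i, j) \<in> ordered_pairs n \<Longrightarrow> H \<le> \<bar>pw (K x) i j - 1/2\<bar>"
    and SST_K: "\<And>x. x \<in> space Mx \<Longrightarrow> SST n (K x)"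
    and s\<^sub>0_rule: "s\<^sub>0 \<in> rules Mx n"
    and s\<^sub>0_eq: "\<And>x. x \<in> space Mx \<Longrightarrow> s\<^sub>0 x = sigma_star n (K x)"
begin

lemma conditional_excess_bounds:
  assumes x: "x \<in> space Mx" and s: "s \<in> rules Mx n"
  defines "M \<equiv> real (card (ordered_pairs n))"
    and "\<Delta> \<equiv> measure_pmf.expectation (K x) (dtau n (s x)) - measure_pmf.expectation (K x) (dtau n (s\<^sub>0 x))"
  shows "0 \<le> \<Delta>"
    and "measure_pmf.expectation (K x) (\<lambda>\<tau>. exp (- (ln (1 + 2*H) / M) * (dtau n (s x) \<tau> - dtau n (s\<^sub>0 x) \<tau>)))
           \<le> 1 - (H / M) * \<Delta>"
proof -
  have majority: "s\<^sub>0 x i < s\<^sub>0 x j \<longleftrightarrow> pw (K x) i j > 1/2" if "(i, j) \<in> ordered_pairs n" for i j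
    using that sigma_star_less_iff[OF SST_K[OF x]] s\<^sub>0_eq[OF x] by (auto simp: mem_ordered_pairs)
  show "0 \<le> \<Delta>"
    and "measure_pmf.expectation (K x) (\<lambda>\<tau>. exp (- (ln (1 + 2*H) / M) * (dtau n (s x) \<tau> - dtau n (s\<^sub>0 x) \<tau>)))
           \<le> 1 - (H / M) * \<Delta>"
    unfolding M_def \<Delta>_def
    using kendall_excess_bounds[OF set_pmf_K[OF x] two_le_n rules_perms[OF s x] rules_perms[OF s\<^sub>0_rule x]
        majority H_pos margin[OF x]] by auto
qed

lemma integrable_expected_dtau:
  "s \<in> rules Mx n \<Longrightarrow> integrable PX (\<lambda>x. measure_pmf.expectation (K x) (dtau n (s x)))"
  using dtau_nonneg dtau_le_card_ordered_pairs
  by (intro integrable_expectation_K[where B = "card (ordered_pairs n)"])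
     (auto simp: borel_measurable_dtau_rule)

lemma risk_s\<^sub>0_le:
  assumes s: "s \<in> rules Mx n"
  shows "risk n D s\<^sub>0 \<le> risk n D s"
  unfolding risk_eq_integral_expectation[OF s\<^sub>0_rule] risk_eq_integral_expectation[OF s]
  by (rule integral_mono[OF integrable_expected_dtau[OF s\<^sub>0_rule] integrable_expected_dtau[OF s]])
     (use conditional_excess_bounds(1)[OF _ s] in simp)

lemma risk_star_eq: "risk_star n Mx D = risk n D s\<^sub>0"
  unfolding risk_star_def using risk_s\<^sub>0_le s\<^sub>0_rule by (intro cInf_eq_minimum) auto

lemma excess_mgf_bound:
  assumes s: "s \<in> rules Mx n"
  defines "M \<equiv> real (card (ordered_pairs n))"
  shows "(\<integral>z. exp (- (ln (1 + 2*H) / M) * (dtau n (s (fst z)) (snd z) - dtau n (s\<^sub>0 (fst z)) (snd z))) \<partial>D)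
           \<le> 1 - (H / M) * (risk n D s - risk n D s\<^sub>0)"
proof -
  interpret PX: prob_space PX by (rule prob_space_PX)
  define l where "l = ln (1 + 2*H) / M"
  define F where "F = (\<lambda>x \<tau>. exp (- l * (dtau n (s x) \<tau> - dtau n (s\<^sub>0 x) \<tau>)))"
  have l: "0 \<le> l"
    unfolding l_def M_def using H_pos by simp
  have F_le: "\<bar>F x \<tau>\<bar> \<le> exp (l * M)" for x \<tau>
  proof -
    have "dtau n (s\<^sub>0 x) \<tau> - dtau n (s x) \<tau> \<le> M"
      unfolding M_def using dtau_le_card_ordered_pairs[of n] dtau_nonneg[of n] by (smt (verit))
    then have "l * (dtau n (s\<^sub>0 x) \<tau> - dtau n (s x) \<tau>) \<le> l * M"
      by (rule mult_left_mono[OF _ l])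
    then have "- l * (dtau n (s x) \<tau> - dtau n (s\<^sub>0 x) \<tau>) \<le> l * M"
      by (simp add: algebra_simps)
    then show ?thesis unfolding F_def by simp
  qed
  have F_meas: "(\<lambda>x. F x \<tau>) \<in> borel_measurable Mx" for \<tau>
    unfolding F_def using borel_measurable_dtau_rule(2)[OF s] borel_measurable_dtau_rule(2)[OF s\<^sub>0_rule] by auto
  have "(\<integral>z. F (fst z) (snd z) \<partial>D) = (\<integral>x. measure_pmf.expectation (K x) (F x) \<partial>PX)"
    using borel_measurable_dtau_rule(1)[OF s] borel_measurable_dtau_rule(1)[OF s\<^sub>0_rule]
    by (intro integral_disintegration F_meas) (auto simp: F_def)
  also have "\<dots> \<le> (\<integral>x. 1 - (H / M) * (measure_pmf.expectation (K x) (dtau n (s x))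
                                        - measure_pmf.expectation (K x) (dtau n (s\<^sub>0 x))) \<partial>PX)"
    using integrable_expected_dtau[OF s] integrable_expected_dtau[OF s\<^sub>0_rule]
      conditional_excess_bounds(2)[OF _ s]
    by (intro integral_mono integrable_expectation_K[OF F_meas F_le])
       (auto simp: F_def l_def M_def)
  also have "\<dots> = 1 - (H / M) * (risk n D s - risk n D s\<^sub>0)"
    using integrable_expected_dtau[OF s] integrable_expected_dtau[OF s\<^sub>0_rule]
    using PX.prob_space by (simp add: risk_eq_integral_expectation s s\<^sub>0_rule)
  finally show ?thesis
    unfolding F_def l_def .
qed

lemma borel_measurable_emp_risk:
  assumes s: "s \<in> rules Mx n"
  shows "(\<lambda>\<omega>. emp_risk n N \<omega> s) \<in> borel_measurable (Pi\<^sub>M {..<N} (\<lambda>_. D))"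
proof -
  have "(\<lambda>\<omega>. dtau n (s (fst (\<omega> k))) (snd (\<omega> k))) \<in> borel_measurable (Pi\<^sub>M {..<N} (\<lambda>_. D))"
    if "k \<in> {..<N}" for k
    using measurable_compose[OF measurable_component_singleton[OF that] borel_measurable_dtau_rule(1)[OF s]]
    by simp
  then show ?thesis
    unfolding emp_risk_def by (intro borel_measurable_times borel_measurable_const borel_measurable_sum)
qed

lemma prob_emp_risk_le_s\<^sub>0:
  assumes s: "s \<in> rules Mx n" and N: "1 \<le> N"
  defines "M \<equiv> real (card (ordered_pairs n))"
  shows "measure (Pi\<^sub>M {..<N} (\<lambda>_. D))
           {\<omega> \<in> space (Pi\<^sub>M {..<N} (\<lambda>_. D)). emp_risk n N \<omega> s \<le> emp_risk n N \<omega> s\<^sub>0}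
         \<le> exp (- real N * (H / M) * (risk n D s - risk n D s\<^sub>0))"
proof -
  interpret D: prob_space D by (rule prob_space_D)
  define Z where "Z z = dtau n (s (fst z)) (snd z) - dtau n (s\<^sub>0 (fst z)) (snd z)" for z
  define t where "t = (H / M) * (risk n D s - risk n D s\<^sub>0)"
  have emp_risk_le_iff: "emp_risk n N \<omega> s \<le> emp_risk n N \<omega> s\<^sub>0 \<longleftrightarrow> (\<Sum>k<N. Z (\<omega> k)) \<le> 0" for \<omega>
    using N unfolding emp_risk_def Z_def by (simp add: sum_subtractf divide_le_cancel)
  have Z_bounded: "\<bar>Z z\<bar> \<le> M" for z
    unfolding Z_def M_def using dtau_le_card_ordered_pairs[of n] dtau_nonneg[of n] by (smt (verit))
  have Z_meas: "Z \<in> borel_measurable D"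
    unfolding Z_def using borel_measurable_dtau_rule(1)[OF s] borel_measurable_dtau_rule(1)[OF s\<^sub>0_rule] by auto
  have mgf: "(\<integral>z. exp (- (ln (1 + 2*H) / M) * Z z) \<partial>D) \<le> 1 - t"
    using excess_mgf_bound[OF s] unfolding Z_def t_def M_def .
  have "measure (Pi\<^sub>M {..<N} (\<lambda>_. D))
           {\<omega> \<in> space (Pi\<^sub>M {..<N} (\<lambda>_. D)). emp_risk n N \<omega> s \<le> emp_risk n N \<omega> s\<^sub>0}
      \<le> (\<integral>z. exp (- (ln (1 + 2*H) / M) * Z z) \<partial>D) ^ N"
    unfolding emp_risk_le_iff using H_pos
    by (intro prob_sum_nonpos_le_mgf_power[OF prob_space_D Z_meas Z_bounded]) (simp add: M_def)
  also have "\<dots> \<le> exp (- t) ^ N"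
    using mgf exp_ge_add_one_self[of "- t"] by (intro power_mono) auto
  also have "\<dots> = exp (- real N * t)"
    by (simp add: exp_of_nat_mult[symmetric])
  finally show ?thesis
    unfolding t_def by (simp add: mult.assoc)
qed

lemma prob_emp_risk_le_s\<^sub>0_of_large_excess:
  assumes s: "s \<in> rules Mx n" and N: "1 \<le> N" and pos: "0 < \<delta>" "0 < C"
    and excess: "(real (n * (n - 1)) / (2 * H)) * (ln (C / \<delta>) / real N) < risk n D s - risk n D s\<^sub>0"
  shows "measure (Pi\<^sub>M {..<N} (\<lambda>_. D))
           {\<omega> \<in> space (Pi\<^sub>M {..<N} (\<lambda>_. D)). emp_risk n N \<omega> s \<le> emp_risk n N \<omega> s\<^sub>0}
         \<le> \<delta> / C"
proof -
  define M where "M = real (card (ordered_pairs n))"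
  have M: "0 < M"
    unfolding M_def using ordered_pairs_nonempty[OF two_le_n] by (simp add: card_gt_0_iff)
  have "real (n * (n - 1)) = 2 * M"
    unfolding M_def by (subst card_ordered_pairs[symmetric]) simp
  then have "ln (C / \<delta>) < real N * (H / M) * (risk n D s - risk n D s\<^sub>0)"
    using excess N H_pos M by (simp only:) (simp add: field_simps)
  then have "exp (- real N * (H / M) * (risk n D s - risk n D s\<^sub>0)) \<le> exp (- ln (C / \<delta>))"
    by simp
  also have "\<dots> = \<delta> / C"
    using pos by (simp add: exp_minus inverse_eq_divide)
  finally show ?thesis
    using prob_emp_risk_le_s\<^sub>0[OF s N] unfolding M_def by linarith
qed

lemma excess_risk_bound:
  assumes N: "1 \<le> N" and S0: "S0 \<subseteq> rules Mx n" "finite S0" "s\<^sub>0 \<in> S0" and \<delta>: "0 < \<delta>"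
  shows "measure (Pi\<^sub>M {..<N} (\<lambda>_. D))
           {\<omega> \<in> space (Pi\<^sub>M {..<N} (\<lambda>_. D)).
              \<forall>s\<in>S0. (\<forall>s'\<in>S0. emp_risk n N \<omega> s \<le> emp_risk n N \<omega> s') \<longrightarrow>
                 risk n D s - risk_star n Mx D
                   \<le> (real (n * (n - 1)) / (2 * H)) * (ln (real (card S0) / \<delta>) / real N)}
         \<ge> 1 - \<delta>"
proof -
  define PM where "PM = Pi\<^sub>M {..<N} (\<lambda>_. D)"
  define C where "C = real (card S0)"
  define b where "b = (real (n * (n - 1)) / (2 * H)) * (ln (C / \<delta>) / real N)"
  define Good where "Good = {\<omega> \<in> space PM. \<forall>s\<in>S0. (\<forall>s'\<in>S0. emp_risk n N \<omega> s \<le> emp_risk n N \<omega> s') \<longrightarrow>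
                               risk n D s - risk_star n Mx D \<le> b}"
  define Bad where "Bad = {s \<in> S0. risk n D s - risk_star n Mx D > b}"
  define Beats where "Beats s = {\<omega> \<in> space PM. emp_risk n N \<omega> s \<le> emp_risk n N \<omega> s\<^sub>0}" for s
  interpret PM: prob_space PM
    unfolding PM_def by (intro prob_space_PiM prob_space_D)
  have "card S0 > 0"
    using S0(2,3) card_gt_0_iff by blast
  then have C: "1 \<le> C"
    unfolding C_def by simp
  have emp_risk_meas: "(\<lambda>\<omega>. emp_risk n N \<omega> s) \<in> borel_measurable PM" if "s \<in> S0" for s
    using borel_measurable_emp_risk S0(1) that unfolding PM_def by blast
  have Good_sets: "Good \<in> sets PM"
    unfolding Good_def using S0(2)
    by (intro sets.sets_Collect_finite_All sets.sets_Collect_imp sets.sets_Collect_const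
        borel_measurable_le emp_risk_meas) auto
  have Beats_sets: "Beats s \<in> sets PM" if "s \<in> S0" for s
    unfolding Beats_def by (intro borel_measurable_le emp_risk_meas that S0(3))
  have Beats_prob: "PM.prob (Beats s) \<le> \<delta> / C" if "s \<in> Bad" for s
    using that S0(1) C \<delta> unfolding Bad_def Beats_def PM_def b_def risk_star_eq
    by (intro prob_emp_risk_le_s\<^sub>0_of_large_excess[OF _ N]) auto
  have "space PM - Good \<subseteq> (\<Union>s\<in>Bad. Beats s)"
    using S0(3) unfolding Good_def Bad_def Beats_def by auto
  then have "PM.prob (space PM - Good) \<le> (\<Sum>s\<in>Bad. PM.prob (Beats s))"
    using Beats_sets S0(2) unfolding Bad_def
    by (intro order_trans[OF PM.finite_measure_mono PM.finite_measure_subadditive_finite]) auto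
  also have "\<dots> \<le> card Bad * (\<delta> / C)"
    using sum_mono[OF Beats_prob] by simp
  also have "\<dots> \<le> C * (\<delta> / C)"
    using S0(2) \<delta> C unfolding Bad_def C_def by (intro mult_right_mono) (auto intro: card_mono)
  also have "\<dots> = \<delta>"
    using C by simp
  finally show ?thesis
    using PM.prob_compl[OF Good_sets] unfolding Good_def PM_def b_def C_def by simp
qed

end

lemma INF_Min_pairs_le:
  fixes g :: "'x \<Rightarrow> nat \<Rightarrow> nat \<Rightarrow> real"
  assumes x: "x \<in> X" and ij: "1 \<le> i" "i < j" "j \<le> n" and nonneg: "\<And>x i j. 0 \<le> g x i j"
  shows "(INF x\<in>X. Min {g x i j | i j. 1 \<le> i \<and> i < j \<and> j \<le> n}) \<le> g x i j"
proof -
  define G where "G x = {g x i j | i j. 1 \<le> i \<and> i < j \<and> j \<le> n}" for x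
  have finite: "finite (G y)" for y
    by (rule finite_subset[of _ "(\<lambda>(i, j). g y i j) ` ({1..n} \<times> {1..n})"]) (auto simp: G_def)
  have "g x i j \<in> G x"
    using ij unfolding G_def by blast
  moreover have "0 \<le> Min (G y)" if "y \<in> X" for y
  proof -
    have "G y \<noteq> {}"
      using ij unfolding G_def by blast
    then show ?thesis
      using finite nonneg by (subst Min_ge_iff) (auto simp: G_def)
  qed
  ultimately show ?thesis
    unfolding G_def[symmetric]
    by (intro cINF_lower2[OF _ x] bdd_belowI2[where m = 0] Min_le finite) auto
qed

theorem proposition7:
  fixes Mx :: "'x measure"
    and D :: "('x \<times> (nat \<Rightarrow> nat)) measure"
    and K :: "'x \<Rightarrow> (nat \<Rightarrow> nat) pmf"
    and n N :: nat
    and S0 :: "('x \<Rightarrow> nat \<Rightarrow> nat) set"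
    and H \<delta> :: real
  assumes n2: "n \<ge> 2"
    and N1: "N \<ge> 1"
    and D_prob: "prob_space D"
    and D_sets: "sets D = sets (Mx \<Otimes>\<^sub>M count_space UNIV)"
    and K_meas: "\<And>\<sigma>. (\<lambda>x. pmf (K x) \<sigma>) \<in> borel_measurable Mx"
    and K_cond: "\<And>A \<sigma>. A \<in> sets Mx \<Longrightarrow>
        emeasure D (A \<times> {\<sigma>}) = (\<integral>\<^sup>+ x\<in>A. ennreal (pmf (K x) \<sigma>) \<partial>(distr D Mx fst))"
    and K_SST: "\<forall>x\<in>space Mx. SST n (K x)"
    and H_def: "H = (INF x\<in>space Mx. Min {\<bar>pw (K x) i j - 1/2\<bar> | i j. 1 \<le> i \<and> i < j \<and> j \<le> n})"
    and H_pos: "H > 0"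
    and S0_sub: "S0 \<subseteq> rules Mx n"
    and S0_fin: "finite S0"
    and S0_star: "\<exists>s\<in>S0. \<forall>x\<in>space Mx. s x = sigma_star n (K x)"
    and \<delta>: "0 < \<delta>" "\<delta> < 1"
  shows "measure (Pi\<^sub>M {..<N} (\<lambda>_. D))
           {\<omega> \<in> space (Pi\<^sub>M {..<N} (\<lambda>_. D)).
              \<forall>s\<in>S0. (\<forall>s'\<in>S0. emp_risk n N \<omega> s \<le> emp_risk n N \<omega> s') \<longrightarrow>
                 risk n D s - risk_star n Mx D
                   \<le> (real (n * (n - 1)) / (2 * H)) * (ln (real (card S0) / \<delta>) / real N)}
         \<ge> 1 - \<delta>"
proof -
  obtain s\<^sub>0 where s\<^sub>0: "s\<^sub>0 \<in> S0" "\<forall>x\<in>space Mx. s\<^sub>0 x = sigma_star n (K x)"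
    using S0_star by blast
  have margin: "H \<le> \<bar>pw (K x) i j - 1/2\<bar>" if "x \<in> space Mx" "(i, j) \<in> ordered_pairs n" for x i j
    using INF_Min_pairs_le[of x "space Mx" i j n "\<lambda>x i j. \<bar>pw (K x) i j - 1/2\<bar>"] that
    unfolding H_def by (auto simp: mem_ordered_pairs)
  interpret sst_margin_model Mx D K n H s\<^sub>0
  proof (intro sst_margin_model.intro ranking_model.intro sst_margin_model_axioms.intro)
    show "set_pmf (K x) \<subseteq> perms n" if "x \<in> space Mx" for x
      using K_SST that unfolding SST_def by blast
  qed (use D_prob D_sets K_meas K_cond K_SST n2 H_pos margin S0_sub s\<^sub>0 in auto)
  show ?thesis
    by (rule excess_risk_bound[OF N1 S0_sub S0_fin s\<^sub>0(1) \<delta>(1)])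
qed

end
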